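(* Let $0<x_1<\dots<x_n$ and $a_1,\dots,a_n>0$ with $\sum a_i=1$, and let $\mu=\sum_{i=1}^na_i\delta_{x_i}$. Let $\eta_i$, $H$, $\nu$ be as in the setting below, and $m_\eta=\mathbf{E}[\eta_1]$. Then $$s_\nu(z)=\frac{-1}{z\sum_{i=1}^n\frac{a_i}{x_i-z}}-1,$$ and $\nu$ is purely atomic with exactly $n$ atoms located in increasing order at $0,y_1,\dots,y_{n-1}$, where $y_i$ is the unique root of $y\mapsto\sum_{j=1}^n\frac{a_j}{x_j-y}$ in $(x_i,x_{i+1})$; the mass is $\nu(\{y_i\})=\lim_{z\to y_i}(y_i-z)s_\nu(z)$. Consequently, for all $x>0$, $$H(x)=\frac1{m_\eta}+\sum_{i=1}^{n-1}e^{-xy_i}\nu(\{y_i\}).$$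
   Context: Setting: $\mu$ is a probability measure on $[0,\infty)$; $(\eta_n)_{n\ge1}$ are i.i.d. positive random variables with density $f_\eta(x)=\int_0^\infty s e^{-sx}\mathrm{d}\mu(s)$, $x>0$; $H(x)=\sum_{k\ge1}f_{\eta_1+\dots+\eta_k}(x)$ is the renewal intensity; $\nu$ is the positive measure on $[0,\infty)$ with $(1+s_\nu(z))s_\mu(z)=-1/z$ and $H(x)=\int_0^\infty e^{-xs}\mathrm{d}\nu(s)$. Stieltjes transform: $s_\mu(z)=\int\frac{\mathrm{d}\mu(x)}{x-z}$. *)

theory Defs
  imports "HOL-Analysis.Analysis"
begin

definition stieltjes :: "real measure \<Rightarrow> complex \<Rightarrow> complex" where
  "stieltjes M z = (\<integral> s. 1 / (complex_of_real s - z) \<partial>M)"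

text \<open>Density of eta for mu = sum_{i=1..n} a_i delta_{x_i}:
  f(t) = int s e^{-s t} dmu(s) = sum a_i x_i e^{-x_i t} for t > 0 (0 otherwise).\<close>
definition f_eta :: "nat \<Rightarrow> (nat \<Rightarrow> real) \<Rightarrow> (nat \<Rightarrow> real) \<Rightarrow> real \<Rightarrow> real" where
  "f_eta n a x t = (if t > 0 then (\<Sum>i\<in>{1..n}. a i * x i * exp (- x i * t)) else 0)"

text \<open>Convolution of densities supported on (0, infinity).\<close>
definition conv :: "(real \<Rightarrow> real) \<Rightarrow> (real \<Rightarrow> real) \<Rightarrow> real \<Rightarrow> real" where
  "conv f g t = (\<integral> s. indicator {0..t} s * f s * g (t - s) \<partial>lborel)"

text \<open>conv_pow f k is the density of eta_1 + ... + eta_(k+1).\<close>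
primrec conv_pow :: "(real \<Rightarrow> real) \<Rightarrow> nat \<Rightarrow> real \<Rightarrow> real" where
  "conv_pow f 0 = f"
| "conv_pow f (Suc k) = conv (conv_pow f k) f"

definition renewal_H :: "(real \<Rightarrow> real) \<Rightarrow> real \<Rightarrow> real" where
  "renewal_H f t = (\<Sum>k. conv_pow f k t)"

definition mean_eta :: "(real \<Rightarrow> real) \<Rightarrow> real" where
  "mean_eta f = (\<integral> t. t * f t \<partial>lborel)"

end

theory Submission
  imports Defs "HOL-Probability.Distributions"
begin

text \<open>Here \<open>s\<^sub>\<mu>\<close> is the rational function \<open>g z = \<Sum> a\<^sub>i / (x\<^sub>i - z)\<close>, so off the real axis
  \<open>s\<^sub>\<nu> = -1 / (z g) - 1 = -P / (z Q) - 1\<close> with \<open>P = \<Prod> (x\<^sub>i - z)\<close>. The right-hand side is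
  continuous and real on the real axis except at \<open>0\<close> and the zeros of \<open>g\<close>; since \<open>g\<close> increases from
  \<open>-\<infinity>\<close> to \<open>+\<infinity>\<close> on each gap \<open>(x\<^sub>i, x\<^sub>i\<^sub>+\<^sub>1)\<close> and has no other real zeros, these are one
  point \<open>y\<^sub>i\<close> per gap. Bounding the mass of small intervals by the imaginary part of \<open>s\<^sub>\<nu>\<close>
  (Poisson kernel) shows that \<open>\<nu>\<close> lives on \<open>{0, y\<^sub>1, \<dots>, y\<^sub>n\<^sub>-\<^sub>1}\<close>, and each mass is the residue
  \<open>lim (y - z) s\<^sub>\<nu>(z)\<close>, computed explicitly and positive; at \<open>0\<close> it is \<open>1 / g 0 = 1 / E \<eta>\<close>.
  The formula for \<open>H\<close> is then the Laplace transform of this finite atomic measure.\<close>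

section \<open>Measures on the real line with finite support\<close>

lemma AE_in_finite_support:
  fixes M :: "real measure"
  assumes sets: "sets M = sets borel" and "finite S" and "emeasure M (UNIV - S) = 0"
  shows "AE s in M. s \<in> S"
proof -
  have "UNIV - S \<in> sets M"
    using assms by (simp add: finite_imp_closed borel_closed)
  then have "UNIV - S \<in> null_sets M"
    using assms by (simp add: null_setsI)
  then show ?thesis
    by (rule AE_I') (auto simp: sets_eq_imp_space_eq[OF sets])
qed

lemma integral_finite_support:
  fixes M :: "real measure" and f :: "real \<Rightarrow> 'b::{banach,second_countable_topology}"
  assumes sets: "sets M = sets borel" and fin: "finite S" and null: "emeasure M (UNIV - S) = 0"
    and finite_mass: "\<And>p. p \<in> S \<Longrightarrow> emeasure M {p} < \<infinity>"
    and f: "f \<in> borel_measurable borel"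
  shows "integral\<^sup>L M f = (\<Sum>p\<in>S. measure M {p} *\<^sub>R f p)"
proof -
  have meas: "borel_measurable M = (borel_measurable borel :: (real \<Rightarrow> 'b) set)"
    by (rule measurable_cong_sets[OF sets refl])
  have "integral\<^sup>L M f = integral\<^sup>L M (\<lambda>s. \<Sum>p\<in>S. indicator {p} s *\<^sub>R f p)"
  proof (rule integral_cong_AE)
    show "AE s in M. f s = (\<Sum>p\<in>S. indicator {p} s *\<^sub>R f p)"
      using AE_in_finite_support[OF sets fin null]
      by eventually_elim (simp add: fin indicator_def of_bool_def if_distrib[of "\<lambda>c. c *\<^sub>R _"] cong: if_cong)
  qed (use f meas in simp_all)
  also have "\<dots> = (\<Sum>p\<in>S. measure M {p} *\<^sub>R f p)"
  proof -
    have "integrable M (\<lambda>s. indicator {p} s *\<^sub>R f p)" if "p \<in> S" for p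
      using finite_mass[OF that] sets
      by (intro integrable_scaleR_left) (simp add: integrable_indicator_iff)
    then show ?thesis
      using finite_mass sets by (simp add: integral_scaleR_left)
  qed
  finally show ?thesis .
qed

lemma nn_integral_finite_support:
  fixes M :: "real measure" and f :: "real \<Rightarrow> ennreal"
  assumes sets: "sets M = sets borel" and fin: "finite S" and null: "emeasure M (UNIV - S) = 0"
  shows "(\<integral>\<^sup>+ s. f s \<partial>M) = (\<Sum>p\<in>S. f p * emeasure M {p})"
proof -
  have "(\<integral>\<^sup>+ s. f s \<partial>M) = (\<integral>\<^sup>+ s. (\<Sum>p\<in>S. f p * indicator {p} s) \<partial>M)"
    using AE_in_finite_support[OF sets fin null]
    by (intro nn_integral_cong_AE, eventually_elim)
      (simp add: fin indicator_def of_bool_def if_distrib[of "\<lambda>c. _ * c"] cong: if_cong)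
  also have "\<dots> = (\<Sum>p\<in>S. f p * emeasure M {p})"
    using sets by (subst nn_integral_sum) (auto simp: nn_integral_cmult_indicator
        measurable_cong_sets[OF sets refl])
  finally show ?thesis .
qed

lemma ennreal_eq_ennreal_pos_imp_eq:
  fixes a b :: real
  assumes "ennreal a = ennreal b" and "b > 0"
  shows "a = b"
  using assms by (metis ennreal_eq_0_iff ennreal_inj less_le not_le)

section \<open>Stieltjes transforms\<close>

lemma emeasure_interval_le_Im_stieltjes:
  fixes \<nu> :: "real measure"
  assumes sets: "sets \<nu> = sets borel" and e: "e > 0"
    and int: "integrable \<nu> (\<lambda>s. 1 / (complex_of_real s - Complex c e))"
  shows "emeasure \<nu> {c - e .. c + e} \<le> ennreal (2 * e * Im (stieltjes \<nu> (Complex c e)))"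
proof -
  define \<phi> where "\<phi> s = 2 * e * Im (1 / (complex_of_real s - Complex c e))" for s
  have \<phi>_eq: "\<phi> s = 2 * e * (e / ((s - c)\<^sup>2 + e\<^sup>2))" for s
    by (simp add: \<phi>_def Im_divide power2_eq_square)
  have \<phi>_nonneg: "\<phi> s \<ge> 0" for s
    unfolding \<phi>_eq using e by (intro mult_nonneg_nonneg divide_nonneg_pos add_nonneg_pos) auto
  \<comment> \<open>the Poisson kernel dominates the indicator of the interval of half-width \<open>e\<close>\<close>
  have indicator_le: "indicator {c - e .. c + e} s \<le> ennreal (\<phi> s)" for s
  proof (cases "s \<in> {c - e .. c + e}")
    case True
    then have "(s - c)\<^sup>2 \<le> e\<^sup>2"
      using e by (simp add: abs_le_square_iff[symmetric] abs_le_iff)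
    then have "(s - c)\<^sup>2 + e\<^sup>2 \<le> 2 * e * e"
      by (simp add: power2_eq_square)
    moreover have "(s - c)\<^sup>2 + e\<^sup>2 > 0"
      using e by (simp add: add_nonneg_pos)
    ultimately have "1 \<le> 2 * e * e / ((s - c)\<^sup>2 + e\<^sup>2)"
      by (simp add: le_divide_eq)
    then have "1 \<le> \<phi> s"
      by (simp add: \<phi>_eq)
    then show ?thesis using True by simp
  qed simp
  have "emeasure \<nu> {c - e .. c + e} = (\<integral>\<^sup>+ s. indicator {c - e .. c + e} s \<partial>\<nu>)"
    using sets by simp
  also have "\<dots> \<le> (\<integral>\<^sup>+ s. ennreal (\<phi> s) \<partial>\<nu>)"
    by (intro nn_integral_mono indicator_le)
  also have "\<dots> = ennreal (integral\<^sup>L \<nu> \<phi>)"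
    using int \<phi>_nonneg unfolding \<phi>_def
    by (intro nn_integral_eq_integral integrable_mult_right integrable_Im) auto
  also have "integral\<^sup>L \<nu> \<phi> = 2 * e * Im (stieltjes \<nu> (Complex c e))"
    unfolding \<phi>_def stieltjes_def using int by simp
  finally show ?thesis .
qed

lemma emeasure_singleton_finite_if_stieltjes_integrable:
  fixes \<nu> :: "real measure"
  assumes sets: "sets \<nu> = sets borel"
    and int: "\<And>z. Im z \<noteq> 0 \<Longrightarrow> integrable \<nu> (\<lambda>s. 1 / (complex_of_real s - z))"
  shows "emeasure \<nu> {p} < \<infinity>"
proof -
  have "emeasure \<nu> {p} \<le> emeasure \<nu> {p - 1 .. p + 1}"
    by (rule emeasure_mono) (auto simp: sets)
  also have "\<dots> \<le> ennreal (2 * 1 * Im (stieltjes \<nu> (Complex p 1)))"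
    by (rule emeasure_interval_le_Im_stieltjes[OF sets _ int]) auto
  also have "\<dots> < \<infinity>"
    by simp
  finally show ?thesis .
qed

lemma emeasure_interval_le_if_small_intervals_le:
  fixes \<nu> :: "real measure"
  assumes sets: "sets \<nu> = sets borel" and r: "r > 0" and d: "d > 0" and \<eta>: "\<eta> \<ge> 0"
    and small: "\<And>c e. c \<in> {p - r .. p + r} \<Longrightarrow> 0 < e \<Longrightarrow> e < d
        \<Longrightarrow> emeasure \<nu> {c - e .. c + e} \<le> ennreal (2 * e * \<eta>)"
  shows "emeasure \<nu> {p - r .. p + r} \<le> ennreal (2 * r * \<eta>)"
proof -
  obtain N :: nat where N: "r / d < N"
    using reals_Archimedean2 by blast
  moreover have "0 < r / d"
    using r d by simp
  ultimately have N_pos: "N > 0"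
    by linarith
  define e where "e = r / N"
  have e: "e > 0" "e < d" "e \<le> r" and Ne: "real N * e = r"
    using N N_pos r d by (auto simp: e_def field_simps)
  have cover: "emeasure \<nu> {p - r .. p - r + 2 * m * e} \<le> ennreal (2 * e * \<eta> * m)"
    if "1 \<le> m" "m \<le> N" for m :: nat
    using that
  proof (induction m rule: nat_induct_at_least)
    case base
    have "emeasure \<nu> {p - r .. p - r + 2 * 1 * e} = emeasure \<nu> {(p - r + e) - e .. (p - r + e) + e}"
      by (simp add: algebra_simps)
    also have "\<dots> \<le> ennreal (2 * e * \<eta>)"
      using e by (intro small) auto
    finally show ?case by simp
  next
    case (Suc m)
    define c where "c = p - r + (2 * m + 1) * e"
    have "(2 * real m + 1) * e \<le> 2 * real N * e"
      using Suc.prems e by (intro mult_right_mono) auto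
    then have c: "c \<in> {p - r .. p + r}"
      using e Ne by (auto simp: c_def algebra_simps)
    have "{p - r .. p - r + 2 * Suc m * e} \<subseteq> {p - r .. p - r + 2 * m * e} \<union> {c - e .. c + e}"
      by (auto simp: c_def algebra_simps)
    then have "emeasure \<nu> {p - r .. p - r + 2 * Suc m * e}
        \<le> emeasure \<nu> ({p - r .. p - r + 2 * m * e} \<union> {c - e .. c + e})"
      by (rule emeasure_mono) (simp add: sets)
    also have "\<dots> \<le> emeasure \<nu> {p - r .. p - r + 2 * m * e} + emeasure \<nu> {c - e .. c + e}"
      by (rule emeasure_subadditive) (simp_all add: sets)
    also have "\<dots> \<le> ennreal (2 * e * \<eta> * m) + ennreal (2 * e * \<eta>)"
      using Suc c e by (intro add_mono small) auto
    also have "\<dots> = ennreal (2 * e * \<eta> * Suc m)"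
      using e \<eta> by (simp add: ennreal_plus[symmetric] algebra_simps del: ennreal_plus)
    finally show ?case .
  qed
  have "p - r + 2 * N * e = p + r" and "2 * e * \<eta> * N = 2 * r * \<eta>"
    using Ne by (auto simp: algebra_simps)
  with cover[of N] N_pos show ?thesis
    by (metis One_nat_def Suc_leI order_refl)
qed

text \<open>A real-valued continuous extension of the Stieltjes transform across a real interval
  forces the measure to vanish there: by the Poisson-kernel bound each small interval
  \<open>[c - e, c + e]\<close> has mass at most \<open>2 e Im F(c + i e)\<close>, and \<open>Im F(c + i e) \<rightarrow> Im F(c) = 0\<close>
  uniformly in \<open>c\<close>.\<close>
lemma emeasure_interval_eq_0_if_real_extension:
  fixes \<nu> :: "real measure" and F :: "complex \<Rightarrow> complex"
  assumes sets: "sets \<nu> = sets borel" and r: "r > 0"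
    and int: "\<And>z. Im z \<noteq> 0 \<Longrightarrow> integrable \<nu> (\<lambda>s. 1 / (complex_of_real s - z))"
    and cont: "continuous_on (cball (complex_of_real p) (2 * r)) F"
    and real: "\<And>c. c \<in> {p - r .. p + r} \<Longrightarrow> Im (F (complex_of_real c)) = 0"
    and ext: "\<And>z. z \<in> cball (complex_of_real p) (2 * r) \<Longrightarrow> Im z \<noteq> 0 \<Longrightarrow> stieltjes \<nu> z = F z"
  shows "emeasure \<nu> {p - r .. p + r} = 0"
proof -
  let ?K = "cball (complex_of_real p) (2 * r)"
  have ucont: "uniformly_continuous_on ?K F"
    by (rule compact_uniformly_continuous[OF cont compact_cball])
  have bound: "emeasure \<nu> {p - r .. p + r} \<le> ennreal (2 * r * \<eta>)" if \<eta>: "\<eta> > 0" for \<eta>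
  proof -
    obtain \<delta> where \<delta>: "\<delta> > 0" and close: "\<And>u v. u \<in> ?K \<Longrightarrow> v \<in> ?K \<Longrightarrow> dist v u < \<delta>
        \<Longrightarrow> dist (F v) (F u) < \<eta>"
      using ucont[unfolded uniformly_continuous_on_def] \<eta> by metis
    show ?thesis
    proof (rule emeasure_interval_le_if_small_intervals_le[OF sets r, of "min \<delta> r"])
      fix c e assume c: "c \<in> {p - r .. p + r}" and e: "0 < e" "e < min \<delta> r"
      have "dist (complex_of_real p) (Complex c e) \<le> \<bar>p - c\<bar> + \<bar>e\<bar>"
        unfolding dist_norm using cmod_le[of "complex_of_real p - Complex c e"] by simp
      then have z_in: "Complex c e \<in> ?K"
        using c e by auto
      have c_in: "complex_of_real c \<in> ?K"
        using c r by (auto simp: dist_norm simp flip: of_real_diff)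
      have "dist (Complex c e) (complex_of_real c) = e"
        using e by (simp add: dist_norm complex_of_real_def cmod_def)
      then have "dist (F (Complex c e)) (F (complex_of_real c)) < \<eta>"
        using close[OF c_in z_in] e by simp
      moreover have "Im (F (Complex c e)) \<le> dist (F (Complex c e)) (F (complex_of_real c))"
        using real[OF c] abs_Im_le_cmod[of "F (Complex c e) - F (complex_of_real c)"]
        by (simp add: dist_norm)
      ultimately have "Im (stieltjes \<nu> (Complex c e)) \<le> \<eta>"
        using ext[OF z_in] e by simp
      have "emeasure \<nu> {c - e .. c + e} \<le> ennreal (2 * e * Im (stieltjes \<nu> (Complex c e)))"
        using e by (intro emeasure_interval_le_Im_stieltjes[OF sets _ int]) auto
      also have "\<dots> \<le> ennreal (2 * e * \<eta>)"
        using \<open>Im (stieltjes \<nu> (Complex c e)) \<le> \<eta>\<close> e by (intro ennreal_leI mult_left_mono) auto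
      finally show "emeasure \<nu> {c - e .. c + e} \<le> ennreal (2 * e * \<eta>)" .
    qed (use \<delta> r \<eta> in auto)
  qed
  have "emeasure \<nu> {p - r .. p + r} \<le> 0"
  proof (rule ennreal_le_epsilon)
    fix e :: real assume "0 < e"
    then show "emeasure \<nu> {p - r .. p + r} \<le> 0 + ennreal e"
      using bound[of "e / (2 * r)"] r by simp
  qed
  then show ?thesis by simp
qed

lemma emeasure_compl_eq_0_if_locally_null:
  fixes \<nu> :: "real measure"
  assumes sets: "sets \<nu> = sets borel" and "closed S"
    and local_null: "\<And>p. p \<notin> S \<Longrightarrow> \<exists>r>0. emeasure \<nu> {p - r .. p + r} = 0"
  shows "emeasure \<nu> (UNIV - S) = 0"
proof -
  define \<B> where "\<B> = {ball p r | p r. r > 0 \<and> emeasure \<nu> {p - r .. p + r} = 0}"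
  have "\<And>B. B \<in> \<B> \<Longrightarrow> open B"
    by (auto simp: \<B>_def)
  then obtain \<B>' where \<B>': "\<B>' \<subseteq> \<B>" "countable \<B>'" "\<Union>\<B>' = \<Union>\<B>"
    using Lindelof by blast
  have null: "B \<in> null_sets \<nu>" if "B \<in> \<B>" for B
  proof -
    obtain p r where B: "B = ball p r" "emeasure \<nu> {p - r .. p + r} = 0"
      using \<open>B \<in> \<B>\<close> unfolding \<B>_def by blast
    have "{p - r .. p + r} \<in> null_sets \<nu>"
      using B(2) sets by (simp add: null_sets_def)
    moreover have "B \<in> sets \<nu>"
      using B(1) sets by simp
    moreover have "B \<subseteq> {p - r .. p + r}"
      using B(1) by (auto simp: dist_real_def)
    ultimately show ?thesis
      by (rule null_sets_subset)
  qed
  have "(\<Union>B\<in>\<B>'. B) \<in> null_sets \<nu>"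
    using \<B>'(1,2) null by (intro null_sets_UN') blast+
  then have "\<Union>\<B> \<in> null_sets \<nu>"
    using \<B>'(3) by simp
  moreover have "UNIV - S \<in> sets \<nu>"
    using sets \<open>closed S\<close> by (simp add: borel_closed Compl_eq_Diff_UNIV[symmetric])
  moreover have "UNIV - S \<subseteq> \<Union>\<B>"
  proof
    fix p assume "p \<in> UNIV - S"
    then obtain r where "r > 0" "emeasure \<nu> {p - r .. p + r} = 0"
      using local_null by blast
    then show "p \<in> \<Union>\<B>"
      unfolding \<B>_def by (intro UnionI[of "ball p r"]) auto
  qed
  ultimately have "UNIV - S \<in> null_sets \<nu>"
    by (rule null_sets_subset)
  then show ?thesis
    by (rule null_setsD1)
qed

lemma stieltjes_finite_support:
  fixes \<nu> :: "real measure"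
  assumes sets: "sets \<nu> = sets borel" and fin: "finite S" and null: "emeasure \<nu> (UNIV - S) = 0"
    and finite_mass: "\<And>p. p \<in> S \<Longrightarrow> emeasure \<nu> {p} < \<infinity>"
  shows "stieltjes \<nu> z = (\<Sum>q\<in>S. complex_of_real (measure \<nu> {q}) / (complex_of_real q - z))"
proof -
  have "(\<lambda>s. 1 / (complex_of_real s - z)) \<in> borel_measurable borel"
    by measurable
  then show ?thesis
    unfolding stieltjes_def
    by (simp add: integral_finite_support[OF sets fin null finite_mass] scaleR_conv_of_real)
qed

lemma tendsto_residue_stieltjes:
  fixes \<nu> :: "real measure"
  assumes sets: "sets \<nu> = sets borel" and fin: "finite S" and null: "emeasure \<nu> (UNIV - S) = 0"
    and finite_mass: "\<And>p. p \<in> S \<Longrightarrow> emeasure \<nu> {p} < \<infinity>" and q: "q \<in> S"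
  shows "((\<lambda>z. (complex_of_real q - z) * stieltjes \<nu> z) \<longlongrightarrow> complex_of_real (measure \<nu> {q}))
      (at (complex_of_real q))"
proof -
  define G where "G z = complex_of_real (measure \<nu> {q}) +
      (\<Sum>p\<in>S - {q}. complex_of_real (measure \<nu> {p}) * (complex_of_real q - z) / (complex_of_real p - z))"
    for z
  have "(complex_of_real q - z) * stieltjes \<nu> z = G z" if "z \<noteq> complex_of_real q" for z
    using that fin q
    by (simp add: stieltjes_finite_support[OF sets fin null finite_mass] G_def sum_distrib_left
        sum.remove[of S q] field_simps)
  then have "\<forall>\<^sub>F z in at (complex_of_real q). G z = (complex_of_real q - z) * stieltjes \<nu> z"
    by (auto simp: eventually_at_filter)
  moreover have "(G \<longlongrightarrow> G (complex_of_real q)) (at (complex_of_real q))"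
    unfolding G_def by (intro tendsto_intros) auto
  ultimately show ?thesis
    by (auto simp: G_def intro: Lim_transform_eventually)
qed

text \<open>The residue identity is only needed off the real axis, whose points are limits of non-real ones.\<close>
lemma measure_singleton_eq_if_continuous_residue:
  fixes \<nu> :: "real measure"
  assumes sets: "sets \<nu> = sets borel" and fin: "finite S" and null: "emeasure \<nu> (UNIV - S) = 0"
    and finite_mass: "\<And>p. p \<in> S \<Longrightarrow> emeasure \<nu> {p} < \<infinity>" and q: "q \<in> S"
    and residue: "\<And>z. Im z \<noteq> 0 \<Longrightarrow> (complex_of_real q - z) * stieltjes \<nu> z = h z"
    and cont: "isCont h (complex_of_real q)"
  shows "measure \<nu> {q} = Re (h (complex_of_real q))"
proof -
  let ?F = "at (complex_of_real q) within {z. Im z \<noteq> 0}"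
  have "((\<lambda>z. (complex_of_real q - z) * stieltjes \<nu> z) \<longlongrightarrow> complex_of_real (measure \<nu> {q})) ?F"
    using tendsto_residue_stieltjes[OF assms(1-5)] subset_UNIV by (rule tendsto_within_subset)
  moreover have "((\<lambda>z. (complex_of_real q - z) * stieltjes \<nu> z) \<longlongrightarrow> h (complex_of_real q)) ?F"
  proof (rule Lim_transform_eventually)
    show "(h \<longlongrightarrow> h (complex_of_real q)) ?F"
      using cont subset_UNIV unfolding isCont_def by (rule tendsto_within_subset)
    show "\<forall>\<^sub>F z in ?F. h z = (complex_of_real q - z) * stieltjes \<nu> z"
      using residue by (auto simp: eventually_at_filter)
  qed
  moreover have "complex_of_real q islimpt {z. Im z \<noteq> 0}"
  proof (rule islimpt_approachable[THEN iffD2], intro allI impI)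
    fix e :: real assume "e > 0"
    then have "Complex q (e / 2) \<in> {z. Im z \<noteq> 0} \<and> Complex q (e / 2) \<noteq> complex_of_real q
        \<and> dist (Complex q (e / 2)) (complex_of_real q) < e"
      by (simp add: dist_norm complex_of_real_def cmod_def complex_eq_iff)
    then show "\<exists>z\<in>{z. Im z \<noteq> 0}. z \<noteq> complex_of_real q \<and> dist z (complex_of_real q) < e"
      by blast
  qed
  ultimately have "complex_of_real (measure \<nu> {q}) = h (complex_of_real q)"
    using tendsto_unique trivial_limit_within by blast
  then show ?thesis
    by (metis Re_complex_of_real)
qed

section \<open>The Stieltjes transform of \<open>\<mu>\<close> and its real zeros\<close>

text \<open>\<open>cauchy_sum\<close> is \<open>s\<^sub>\<mu>\<close>; over the common denominator it is \<open>cauchy_numer / node_poly\<close>.\<close>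

definition cauchy_sum :: "nat \<Rightarrow> (nat \<Rightarrow> real) \<Rightarrow> (nat \<Rightarrow> real) \<Rightarrow> 'a::real_normed_field \<Rightarrow> 'a" where
  "cauchy_sum n a x z = (\<Sum>i\<in>{1..n}. of_real (a i) / (of_real (x i) - z))"

definition node_poly :: "nat \<Rightarrow> (nat \<Rightarrow> real) \<Rightarrow> 'a::real_normed_field \<Rightarrow> 'a" where
  "node_poly n x z = (\<Prod>i\<in>{1..n}. of_real (x i) - z)"

definition cauchy_numer :: "nat \<Rightarrow> (nat \<Rightarrow> real) \<Rightarrow> (nat \<Rightarrow> real) \<Rightarrow> 'a::real_normed_field \<Rightarrow> 'a" where
  "cauchy_numer n a x z = (\<Sum>i\<in>{1..n}. of_real (a i) * (\<Prod>k\<in>{1..n} - {i}. of_real (x k) - z))"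

locale ordered_atoms =
  fixes n :: nat and x a :: "nat \<Rightarrow> real"
  assumes n_pos: "n \<ge> 1"
    and x_pos: "0 < x 1"
    and x_incr: "\<And>i. 1 \<le> i \<Longrightarrow> i < n \<Longrightarrow> x i < x (Suc i)"
    and a_pos: "\<And>i. i \<in> {1..n} \<Longrightarrow> a i > 0"
begin

abbreviation "g \<equiv> cauchy_sum n a x"
abbreviation "P \<equiv> node_poly n x"
abbreviation "Q \<equiv> cauchy_numer n a x"

lemma x_less:
  assumes "1 \<le> i" "i < j" "j \<le> n"
  shows "x i < x j"
  using assms
proof (induction j)
  case (Suc j)
  show ?case
  proof (cases "i = j")
    case True
    then show ?thesis using Suc.prems x_incr by simp
  next
    case False
    then have "x i < x j" using Suc by simp
    also have "x j < x (Suc j)" using Suc.prems x_incr[of j] by simp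
    finally show ?thesis .
  qed
qed simp

lemma x_le: "1 \<le> i \<Longrightarrow> i \<le> j \<Longrightarrow> j \<le> n \<Longrightarrow> x i \<le> x j"
  using x_less[of i j] by (cases "i = j") auto

lemma x_gt_0: "i \<in> {1..n} \<Longrightarrow> x i > 0"
  using x_le[of 1 i] x_pos by auto

lemma inj_on_x: "inj_on x {1..n}"
  by (rule inj_onI) (metis atLeastAtMost_iff linorder_cases x_less less_irrefl)

lemma x_outside_gap:
  assumes "j \<in> {1..n}" "1 \<le> i" "i < n"
  shows "x j \<le> x i \<or> x (Suc i) \<le> x j"
  using assms x_le[of j i] x_le[of "Suc i" j] by (cases "j \<le> i") auto

lemma cauchy_sum_mult_node_poly:
  fixes z :: "'a::real_normed_field"
  assumes "\<forall>j\<in>{1..n}. of_real (x j) \<noteq> z"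
  shows "g z * P z = Q z"
proof -
  have "of_real (a i) / (of_real (x i) - z) * P z = of_real (a i) * (\<Prod>k\<in>{1..n} - {i}. of_real (x k) - z)"
    if "i \<in> {1..n}" for i
    using that assms by (simp add: node_poly_def prod.remove)
  then show ?thesis
    unfolding cauchy_sum_def cauchy_numer_def sum_distrib_right by (rule sum.cong[OF refl])
qed

lemma node_poly_nonzero:
  fixes z :: "'a::real_normed_field"
  assumes "\<forall>j\<in>{1..n}. of_real (x j) \<noteq> z"
  shows "P z \<noteq> 0"
  using assms by (auto simp: node_poly_def prod_zero_iff)

text \<open>At a node all but one term of \<open>Q\<close> vanish: \<open>g\<close> has a genuine pole there.\<close>
lemma cauchy_numer_at_node:
  assumes j: "j \<in> {1..n}"
  shows "Q (of_real (x j) :: 'a::real_normed_field) \<noteq> 0"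
proof -
  let ?z = "of_real (x j) :: 'a"
  have "(\<Sum>i\<in>{1..n} - {j}. of_real (a i) * (\<Prod>k\<in>{1..n} - {i}. of_real (x k) - ?z)) = 0"
    using j by (intro sum.neutral) (auto simp: prod_zero_iff)
  then have "Q ?z = of_real (a j) * (\<Prod>k\<in>{1..n} - {j}. of_real (x k) - ?z)"
    using j by (simp add: cauchy_numer_def sum.remove)
  moreover have "(\<Prod>k\<in>{1..n} - {j}. of_real (x k) - ?z) \<noteq> 0"
    using j inj_on_x by (auto simp: prod_zero_iff dest: inj_onD)
  ultimately show ?thesis
    using a_pos[OF j] by simp
qed

lemma node_poly_of_real: "P (complex_of_real t) = complex_of_real (P t)"
  by (simp add: node_poly_def)

lemma cauchy_numer_of_real: "Q (complex_of_real t) = complex_of_real (Q t)"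
  by (simp add: cauchy_numer_def)

lemma cauchy_sum_real: "g t = (\<Sum>j\<in>{1..n}. a j / (x j - t))"
  by (simp add: cauchy_sum_def)

lemma cauchy_sum_nonreal_nonzero:
  assumes "Im z \<noteq> 0"
  shows "g z \<noteq> 0"
proof -
  have "Im (g z) = Im z * (\<Sum>i\<in>{1..n}. a i / ((x i - Re z)\<^sup>2 + (Im z)\<^sup>2))"
    by (simp add: cauchy_sum_def Im_divide power2_eq_square sum_distrib_left mult.commute)
  moreover have "(\<Sum>i\<in>{1..n}. a i / ((x i - Re z)\<^sup>2 + (Im z)\<^sup>2)) > 0"
    using n_pos a_pos assms by (intro sum_pos) (auto intro!: divide_pos_pos add_nonneg_pos)
  ultimately show ?thesis
    using assms by auto
qed

text \<open>At a real zero \<open>y\<close> of \<open>g\<close> that is not a node, \<open>g\<close> has the factor \<open>z - y\<close>; the cofactor at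
  \<open>y\<close> is \<open>\<Sum> a\<^sub>j / (x\<^sub>j - y)\<^sup>2 > 0\<close>, which makes the pole of \<open>s\<^sub>\<nu>\<close> at \<open>y\<close> simple.\<close>
lemma cauchy_sum_factor_at_real_zero:
  fixes z :: complex
  assumes zero: "g y = (0::real)" and y: "\<forall>j\<in>{1..n}. x j \<noteq> y"
    and z: "\<forall>j\<in>{1..n}. complex_of_real (x j) \<noteq> z"
  shows "g z = (z - complex_of_real y) * (\<Sum>j\<in>{1..n}. of_real (a j) / ((of_real (x j) - z) * of_real (x j - y)))"
proof -
  have "of_real (a j) / (of_real (x j) - z) - complex_of_real (a j / (x j - y))
      = (z - complex_of_real y) * (of_real (a j) / ((of_real (x j) - z) * of_real (x j - y)))"
    if "j \<in> {1..n}" for j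
  proof -
    have "complex_of_real (x j) - z \<noteq> 0" "complex_of_real (x j - y) \<noteq> 0"
      using y z that by auto
    then show ?thesis
      by (simp add: field_simps)
  qed
  then have "g z - complex_of_real (g y)
      = (z - complex_of_real y) * (\<Sum>j\<in>{1..n}. of_real (a j) / ((of_real (x j) - z) * of_real (x j - y)))"
    unfolding cauchy_sum_real[of y] cauchy_sum_def[of _ _ _ z] of_real_sum
      sum_subtractf[symmetric] sum_distrib_left
    by (intro sum.cong) auto
  with zero show ?thesis
    by simp
qed

lemma cauchy_sum_pos_below:
  assumes "t < x 1"
  shows "g t > (0::real)"
proof -
  have "t < x i" if "i \<in> {1..n}" for i
    using assms x_le[of 1 i] that by auto
  then show ?thesis
    using n_pos a_pos by (auto simp: cauchy_sum_real intro!: sum_pos divide_pos_pos)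
qed

lemma cauchy_sum_neg_above:
  assumes "t > x n"
  shows "g t < (0::real)"
proof -
  have "x i < t" if "i \<in> {1..n}" for i
    using assms x_le[of i n] that by auto
  then have "(\<Sum>i\<in>{1..n}. a i / (t - x i)) > 0"
    using n_pos a_pos by (auto intro!: sum_pos divide_pos_pos)
  moreover have "g t = - (\<Sum>i\<in>{1..n}. a i / (t - x i))"
    by (simp add: cauchy_sum_real sum_negf[symmetric] minus_divide_right)
  ultimately show ?thesis by simp
qed

lemma cauchy_sum_strict_mono_gap:
  assumes i: "1 \<le> i" "i < n" and st: "x i < s" "s < t" "t < x (Suc i)"
  shows "g s < (g t :: real)"
proof -
  have pos: "(x j - t) * (x j - s) > 0" if "j \<in> {1..n}" for j
    using x_outside_gap[OF that i] st by (auto intro: mult_neg_neg mult_pos_pos)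
  have "a j / (x j - t) - a j / (x j - s) = a j * (t - s) / ((x j - t) * (x j - s))"
    if "j \<in> {1..n}" for j
  proof -
    have "x j - t \<noteq> 0" "x j - s \<noteq> 0"
      using pos[OF that] by auto
    then show ?thesis by (simp add: field_simps)
  qed
  then have "g t - g s = (\<Sum>j\<in>{1..n}. a j * (t - s) / ((x j - t) * (x j - s)))"
    unfolding cauchy_sum_real sum_subtractf[symmetric] by (rule sum.cong[OF refl])
  also have "\<dots> > 0"
    using n_pos a_pos st pos by (intro sum_pos divide_pos_pos) auto
  finally show ?thesis by simp
qed

text \<open>On the gap \<open>(x i, x (i + 1))\<close>, \<open>g\<close> runs from \<open>-\<infinity>\<close> to \<open>+\<infinity>\<close>; clearing the two poles
  bounding the gap gives a continuous function on the closed gap to which the IVT applies.\<close>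
lemma cauchy_sum_root_in_gap:
  assumes i: "1 \<le> i" "i < n"
  shows "\<exists>t. x i < t \<and> t < x (Suc i) \<and> g t = (0::real)"
proof -
  define J where "J = {1..n} - {i, Suc i}"
  have J_outside: "x j \<notin> {x i .. x (Suc i)}" if "j \<in> J" for j
  proof -
    have "x j \<noteq> x i" "x j \<noteq> x (Suc i)"
      using that i inj_on_x unfolding J_def by (auto dest: inj_onD)
    then show ?thesis
      using that x_outside_gap[of j i] i unfolding J_def by auto
  qed
  define R where "R t = (\<Sum>j\<in>J. a j / (x j - t))" for t
  define h where "h t = (t - x i) * (x (Suc i) - t) * R t
      - a i * (x (Suc i) - t) + a (Suc i) * (t - x i)" for t
  have gap: "x i < x (Suc i)"
    using x_incr i by simp
  have split: "{1..n} = insert i (insert (Suc i) J)"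
    using i by (auto simp: J_def)
  have g_split: "g t = a i / (x i - t) + a (Suc i) / (x (Suc i) - t) + R t" for t
    unfolding cauchy_sum_real R_def split by (simp add: J_def add.assoc)
  have h_eq: "h t = (t - x i) * (x (Suc i) - t) * g t" if "x i < t" "t < x (Suc i)" for t
  proof -
    have "x i - t \<noteq> 0" "x (Suc i) - t \<noteq> 0"
      using that by auto
    then have "(t - x i) * (x (Suc i) - t) * (a i / (x i - t)) = - a i * (x (Suc i) - t)"
      and "(t - x i) * (x (Suc i) - t) * (a (Suc i) / (x (Suc i) - t)) = a (Suc i) * (t - x i)"
      by (simp_all add: field_simps)
    then show ?thesis
      by (simp add: h_def g_split distrib_left)
  qed
  have "continuous_on {x i .. x (Suc i)} h"
    unfolding h_def R_def using J_outside by (intro continuous_intros) force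
  moreover have "h (x i) < 0" "h (x (Suc i)) > 0"
    using a_pos[of i] a_pos[of "Suc i"] i gap by (simp_all add: h_def)
  ultimately obtain t where t: "x i \<le> t" "t \<le> x (Suc i)" "h t = 0"
    using IVT'[of h "x i" 0 "x (Suc i)"] gap by force
  moreover have "t \<noteq> x i" "t \<noteq> x (Suc i)"
    using t \<open>h (x i) < 0\<close> \<open>h (x (Suc i)) > 0\<close> by auto
  ultimately have "x i < t" "t < x (Suc i)"
    by auto
  with h_eq t(3) show ?thesis
    by auto
qed

lemma cauchy_sum_zero_in_gap:
  assumes zero: "g t = (0::real)" and not_node: "t \<notin> x ` {1..n}"
  shows "\<exists>i\<in>{1..<n}. x i < t \<and> t < x (Suc i)"
proof -
  have "x 1 \<noteq> t" "x n \<noteq> t"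
    using not_node n_pos by auto
  moreover have "\<not> t < x 1" "\<not> x n < t"
    using cauchy_sum_pos_below[of t] cauchy_sum_neg_above[of t] zero by auto
  ultimately have "x 1 < t" "t < x n"
    by auto
  define A where "A = {j\<in>{1..n}. x j < t}"
  define i where "i = Max A"
  have "finite A" "1 \<in> A"
    using \<open>x 1 < t\<close> n_pos by (auto simp: A_def)
  then have "i \<in> A"
    unfolding i_def by (intro Max_in) auto
  moreover have "Suc i \<notin> A"
  proof
    assume "Suc i \<in> A"
    then have "Suc i \<le> i"
      unfolding i_def using Max_ge[OF \<open>finite A\<close>] by blast
    then show False by simp
  qed
  ultimately have i: "i \<in> {1..<n}" "x i < t"
    using \<open>t < x n\<close> unfolding A_def by (force simp: less_le)+
  have "Suc i \<in> {1..n}"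
    using i by simp
  then have "\<not> x (Suc i) < t" "t \<noteq> x (Suc i)"
    using \<open>Suc i \<notin> A\<close> not_node unfolding A_def by blast+
  with i show ?thesis
    by force
qed

definition gap_root :: "nat \<Rightarrow> real" where
  "gap_root i = (THE t. x i < t \<and> t < x (Suc i) \<and> g t = 0)"

lemma gap_root_unique:
  assumes i: "1 \<le> i" "i < n" and s: "x i < s" "s < x (Suc i)" "g s = (0::real)"
    and t: "x i < t" "t < x (Suc i)" "g t = (0::real)"
  shows "s = t"
  using cauchy_sum_strict_mono_gap[OF i, of s t] cauchy_sum_strict_mono_gap[OF i, of t s] s t
  by (cases s t rule: linorder_cases) auto

lemma gap_root:
  assumes "i \<in> {1..<n}"
  shows "x i < gap_root i" "gap_root i < x (Suc i)" "g (gap_root i) = (0::real)"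
proof -
  have "\<exists>!t. x i < t \<and> t < x (Suc i) \<and> g t = (0::real)"
    using cauchy_sum_root_in_gap[of i] gap_root_unique[of i] assms by auto
  from theI'[OF this]
  show "x i < gap_root i" "gap_root i < x (Suc i)" "g (gap_root i) = (0::real)"
    unfolding gap_root_def by auto
qed

lemma gap_root_eqI:
  "i \<in> {1..<n} \<Longrightarrow> x i < t \<Longrightarrow> t < x (Suc i) \<Longrightarrow> g t = (0::real) \<Longrightarrow> t = gap_root i"
  using gap_root_unique[of i t "gap_root i"] gap_root[of i] by auto

lemma gap_root_pos: "i \<in> {1..<n} \<Longrightarrow> gap_root i > 0"
  using gap_root(1)[of i] x_gt_0[of i] by auto

lemma gap_root_not_node: "i \<in> {1..<n} \<Longrightarrow> j \<in> {1..n} \<Longrightarrow> x j \<noteq> gap_root i"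
  using x_outside_gap[of j i] gap_root[of i] by auto

lemma inj_on_gap_root: "inj_on gap_root {1..<n}"
proof -
  have "gap_root i < gap_root j" if "i \<in> {1..<n}" "j \<in> {1..<n}" "i < j" for i j
  proof -
    have "gap_root i < x (Suc i)" using gap_root(2)[OF that(1)] .
    also have "x (Suc i) \<le> x j" using x_le[of "Suc i" j] that by auto
    also have "\<dots> < gap_root j" using gap_root(1)[OF that(2)] .
    finally show ?thesis .
  qed
  then show ?thesis
    by (intro inj_onI) (metis linorder_cases less_irrefl)
qed

abbreviation atoms :: "real set" where
  "atoms \<equiv> insert 0 (gap_root ` {1..<n})"

lemma cauchy_numer_nonzero_off_atoms:
  assumes "p \<notin> atoms"
  shows "complex_of_real p * Q (complex_of_real p) \<noteq> 0"
proof -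
  have "Q p \<noteq> (0::real)"
  proof (cases "p \<in> x ` {1..n}")
    case True
    then obtain j where "j \<in> {1..n}" "p = x j" by auto
    then show ?thesis using cauchy_numer_at_node[of j, where 'a=real] by (simp add: of_real_def)
  next
    case False
    then have not_node: "\<forall>j\<in>{1..n}. of_real (x j) \<noteq> p" by auto
    have "g p \<noteq> (0::real)"
      using cauchy_sum_zero_in_gap[of p] gap_root_eqI False assms by blast
    then show ?thesis
      using cauchy_sum_mult_node_poly[OF not_node] node_poly_nonzero[OF not_node] by force
  qed
  then show ?thesis
    using assms by (simp add: cauchy_numer_of_real)
qed

end

lemma mean_eta_f_eta:
  assumes x_pos: "\<And>i. i \<in> {1..n} \<Longrightarrow> x i > 0"
  shows "mean_eta (f_eta n a x) = (\<Sum>i\<in>{1..n}. a i / x i)"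
proof -
  \<comment> \<open>\<open>f_eta\<close> is a mixture of exponential densities, i.e. of Erlang densities of order 0\<close>
  have moment: "has_bochner_integral lborel (\<lambda>t. erlang_density 0 (x i) t * t) (1 / x i)"
    if "i \<in> {1..n}" for i
    using x_pos[OF that] nn_integral_erlang_ith_moment[OF x_pos[OF that], of 0 1]
    by (intro has_bochner_integral_nn_integral) (auto simp: erlang_density_def)
  have "(\<Sum>i\<in>{1..n}. a i * (erlang_density 0 (x i) t * t)) = t * f_eta n a x t" for t
    by (cases "t > 0"; cases "t = 0")
      (auto simp: f_eta_def erlang_density_def sum_distrib_left algebra_simps intro!: sum.cong)
  moreover have "has_bochner_integral lborel (\<lambda>t. \<Sum>i\<in>{1..n}. a i * (erlang_density 0 (x i) t * t))
      (\<Sum>i\<in>{1..n}. a i * (1 / x i))"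
    using moment by (intro has_bochner_integral_sum has_bochner_integral_mult_right) auto
  ultimately show ?thesis
    unfolding mean_eta_def by (simp add: has_bochner_integral_integral_eq)
qed

section \<open>The measure \<open>\<nu>\<close>\<close>

locale renewal_measures = ordered_atoms +
  fixes \<mu> \<nu> :: "real measure"
  assumes \<mu>_sets: "sets \<mu> = sets borel"
    and \<mu>_def: "\<And>A. A \<in> sets borel \<Longrightarrow> emeasure \<mu> A = ennreal (\<Sum>i\<in>{1..n}. a i * indicator A (x i))"
    and \<nu>_sets: "sets \<nu> = sets borel"
    and \<nu>_integrable: "\<And>z. Im z \<noteq> 0 \<Longrightarrow> integrable \<nu> (\<lambda>s. 1 / (complex_of_real s - z))"
    and \<nu>_stieltjes: "\<And>z. Im z \<noteq> 0 \<Longrightarrow> (1 + stieltjes \<nu> z) * stieltjes \<mu> z = - 1 / z"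
begin

lemma emeasure_\<mu>_node:
  assumes j: "j \<in> {1..n}"
  shows "emeasure \<mu> {x j} = ennreal (a j)"
proof -
  have "(\<Sum>i\<in>{1..n}. a i * indicator {x j} (x i)) = (\<Sum>i\<in>{1..n}. if i = j then a i else 0)"
    using j inj_on_x by (intro sum.cong) (auto simp: indicator_def dest: inj_onD)
  then show ?thesis
    using \<mu>_def[of "{x j}"] j by simp
qed

lemma stieltjes_\<mu>: "stieltjes \<mu> z = g z"
proof -
  have "emeasure \<mu> (UNIV - x ` {1..n}) = 0"
    using \<mu>_def[of "UNIV - x ` {1..n}"]
    by (simp add: indicator_def borel_closed Compl_eq_Diff_UNIV[symmetric] finite_imp_closed)
  then have "stieltjes \<mu> z = (\<Sum>p\<in>x ` {1..n}. complex_of_real (measure \<mu> {p}) / (complex_of_real p - z))"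
    using emeasure_\<mu>_node by (intro stieltjes_finite_support[OF \<mu>_sets]) auto
  also have "\<dots> = (\<Sum>i\<in>{1..n}. complex_of_real (measure \<mu> {x i}) / (complex_of_real (x i) - z))"
    by (rule sum.reindex[OF inj_on_x, unfolded comp_def])
  also have "\<dots> = g z"
    unfolding cauchy_sum_def
    by (intro sum.cong refl) (simp add: measure_def emeasure_\<mu>_node a_pos less_imp_le)
  finally show ?thesis .
qed

lemma stieltjes_\<nu>: "Im z \<noteq> 0 \<Longrightarrow> stieltjes \<nu> z = - 1 / (z * g z) - 1"
  using \<nu>_stieltjes[of z] cauchy_sum_nonreal_nonzero[of z] complex_eq_iff[of z 0]
  by (auto simp: stieltjes_\<mu> field_simps)

lemma emeasure_\<nu>_near_non_atom:
  assumes "p \<notin> atoms"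
  shows "\<exists>r>0. emeasure \<nu> {p - r .. p + r} = 0"
proof -
  define F where "F z = - P z / (z * Q z) - 1" for z :: complex
  have cont_Q: "continuous_on A (\<lambda>z::complex. z * Q z)" for A
    unfolding cauchy_numer_def by (intro continuous_intros)
  have "open {z::complex. z * Q z \<noteq> 0}"
    by (rule open_Collect_neq[OF cont_Q continuous_on_const])
  moreover have "complex_of_real p \<in> {z. z * Q z \<noteq> 0}"
    using cauchy_numer_nonzero_off_atoms[OF assms] by simp
  ultimately obtain r0 where "r0 > 0" "ball (complex_of_real p) r0 \<subseteq> {z. z * Q z \<noteq> 0}"
    using open_contains_ball by blast
  moreover have "cball (complex_of_real p) (2 * (r0 / 4)) \<subseteq> ball (complex_of_real p) r0"
    using \<open>r0 > 0\<close> by (intro cball_subset_ball_iff[THEN iffD2]) auto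
  ultimately have r: "r0 / 4 > 0" and ball: "cball (complex_of_real p) (2 * (r0 / 4)) \<subseteq> {z. z * Q z \<noteq> 0}"
    by auto
  have "continuous_on (cball (complex_of_real p) (2 * (r0 / 4))) F"
    unfolding F_def node_poly_def using ball
    by (intro continuous_intros continuous_on_subset[OF cont_Q]) auto
  moreover have "Im (F (complex_of_real c)) = 0" for c
    by (simp add: F_def node_poly_of_real cauchy_numer_of_real Im_divide)
  moreover have "stieltjes \<nu> z = F z" if "Im z \<noteq> 0" for z
  proof -
    have not_node: "\<forall>j\<in>{1..n}. complex_of_real (x j) \<noteq> z"
      using that by auto
    then show ?thesis
      using that node_poly_nonzero[OF not_node] cauchy_sum_nonreal_nonzero[OF that]
      by (simp add: stieltjes_\<nu> F_def flip: cauchy_sum_mult_node_poly[OF not_node])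
  qed
  ultimately show ?thesis
    using r by (intro exI[of _ "r0 / 4"] conjI emeasure_interval_eq_0_if_real_extension[OF \<nu>_sets _ \<nu>_integrable]) auto
qed

lemma emeasure_\<nu>_outside_atoms: "emeasure \<nu> (UNIV - atoms) = 0"
  using emeasure_\<nu>_near_non_atom
  by (intro emeasure_compl_eq_0_if_locally_null[OF \<nu>_sets]) (auto intro: finite_imp_closed)

lemmas emeasure_\<nu>_singleton_finite =
  emeasure_singleton_finite_if_stieltjes_integrable[OF \<nu>_sets \<nu>_integrable]

lemmas tendsto_residue_\<nu> =
  tendsto_residue_stieltjes[OF \<nu>_sets _ emeasure_\<nu>_outside_atoms emeasure_\<nu>_singleton_finite]

lemmas measure_\<nu>_atom =
  measure_singleton_eq_if_continuous_residue[OF \<nu>_sets _ emeasure_\<nu>_outside_atoms emeasure_\<nu>_singleton_finite]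

lemma measure_\<nu>_zero: "measure \<nu> {0} = 1 / (\<Sum>j\<in>{1..n}. a j / x j)"
proof -
  define h where "h z = 1 / g z + z" for z :: complex
  have g0: "g (0::complex) = complex_of_real (\<Sum>j\<in>{1..n}. a j / x j)"
    by (simp add: cauchy_sum_def)
  have "(\<Sum>j\<in>{1..n}. a j / x j) > 0"
    using n_pos a_pos x_gt_0 by (intro sum_pos divide_pos_pos) auto
  then have "g (0::complex) \<noteq> 0"
    by (simp only: g0 of_real_eq_0_iff)
  then have "isCont h (complex_of_real 0)"
    unfolding h_def cauchy_sum_def using x_gt_0 by (intro continuous_intros) force+
  moreover have "(complex_of_real 0 - z) * stieltjes \<nu> z = h z" if "Im z \<noteq> 0" for z
    using cauchy_sum_nonreal_nonzero[OF that] complex_eq_iff[of z 0] that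
    by (simp add: stieltjes_\<nu> h_def field_simps)
  ultimately have "measure \<nu> {0} = Re (h (complex_of_real 0))"
    by (intro measure_\<nu>_atom) auto
  also have "h (complex_of_real 0) = complex_of_real (1 / (\<Sum>j\<in>{1..n}. a j / x j))"
    unfolding h_def of_real_0 g0 by simp
  finally show ?thesis
    by simp
qed

lemma measure_\<nu>_gap_root:
  assumes i: "i \<in> {1..<n}"
  shows "measure \<nu> {gap_root i} = 1 / (gap_root i * (\<Sum>j\<in>{1..n}. a j / (x j - gap_root i)\<^sup>2))"
proof -
  define y where "y = gap_root i"
  define k where "k z = (\<Sum>j\<in>{1..n}. of_real (a j) / ((of_real (x j) - z) * of_real (x j - y)))"
    for z :: complex
  define h where "h z = 1 / (z * k z) - (complex_of_real y - z)" for z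
  have y_not_node: "x j \<noteq> y" if "j \<in> {1..n}" for j
    using gap_root_not_node[OF i that] by (simp add: y_def)
  have ky: "k (complex_of_real y) = complex_of_real (\<Sum>j\<in>{1..n}. a j / (x j - y)\<^sup>2)"
    by (simp add: k_def power2_eq_square)
  have "(\<Sum>j\<in>{1..n}. a j / (x j - y)\<^sup>2) > 0"
    using n_pos a_pos y_not_node by (intro sum_pos divide_pos_pos) auto
  moreover have "y > 0"
    using gap_root_pos[OF i] by (simp add: y_def)
  ultimately have "complex_of_real y * k (complex_of_real y) \<noteq> 0"
    by (simp only: ky of_real_mult[symmetric] of_real_eq_0_iff) simp
  then have "isCont h (complex_of_real y)"
    unfolding h_def k_def using y_not_node by (intro continuous_intros) auto
  moreover have "(complex_of_real y - z) * stieltjes \<nu> z = h z" if z: "Im z \<noteq> 0" for z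
  proof -
    have g_factor: "g z = (z - complex_of_real y) * k z"
      unfolding k_def using gap_root(3)[OF i] y_not_node z
      by (intro cauchy_sum_factor_at_real_zero) (auto simp: y_def)
    moreover have "g z \<noteq> 0" "z \<noteq> 0"
      using cauchy_sum_nonreal_nonzero[OF z] z by auto
    ultimately have "z - complex_of_real y \<noteq> 0" "k z \<noteq> 0"
      by auto
    with \<open>z \<noteq> 0\<close> show ?thesis
      by (simp add: stieltjes_\<nu>[OF z] g_factor h_def field_simps)
  qed
  ultimately have "measure \<nu> {y} = Re (h (complex_of_real y))"
    using i by (intro measure_\<nu>_atom) (auto simp: y_def)
  also have "h (complex_of_real y) = complex_of_real (1 / (y * (\<Sum>j\<in>{1..n}. a j / (x j - y)\<^sup>2)))"
    unfolding h_def ky by simp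
  finally show ?thesis
    by (simp add: y_def)
qed

lemma emeasure_\<nu>_eq_measure: "emeasure \<nu> {p} = ennreal (measure \<nu> {p})"
  using emeasure_\<nu>_singleton_finite[of p] by (intro emeasure_eq_ennreal_measure) simp

lemma emeasure_\<nu>_zero_pos: "0 < emeasure \<nu> {0}"
proof -
  have "(\<Sum>j\<in>{1..n}. a j / x j) > 0"
    using n_pos a_pos x_gt_0 by (intro sum_pos divide_pos_pos) auto
  then show ?thesis
    by (simp add: emeasure_\<nu>_eq_measure measure_\<nu>_zero)
qed

lemma emeasure_\<nu>_gap_root_pos:
  assumes i: "i \<in> {1..<n}"
  shows "0 < emeasure \<nu> {gap_root i}"
proof -
  have "(\<Sum>j\<in>{1..n}. a j / (x j - gap_root i)\<^sup>2) > 0"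
    using n_pos a_pos gap_root_not_node[OF i] by (intro sum_pos divide_pos_pos) auto
  then show ?thesis
    using gap_root_pos[OF i] by (simp add: emeasure_\<nu>_eq_measure measure_\<nu>_gap_root[OF i])
qed

lemma nn_integral_\<nu>:
  "(\<integral>\<^sup>+ s. ennreal (f s) \<partial>\<nu>)
    = ennreal (f 0 * measure \<nu> {0} + (\<Sum>i\<in>{1..<n}. f (gap_root i) * measure \<nu> {gap_root i}))"
  if "\<And>s. f s \<ge> 0" for f :: "real \<Rightarrow> real"
proof -
  have "0 \<notin> gap_root ` {1..<n}"
    using gap_root_pos by force
  then have "(\<integral>\<^sup>+ s. ennreal (f s) \<partial>\<nu>) = (\<Sum>p\<in>atoms. ennreal (f p * measure \<nu> {p}))"
    using that by (simp add: nn_integral_finite_support[OF \<nu>_sets _ emeasure_\<nu>_outside_atoms]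
        emeasure_\<nu>_eq_measure ennreal_mult)
  also have "\<dots> = ennreal (\<Sum>p\<in>atoms. f p * measure \<nu> {p})"
    using that by (intro sum_ennreal) auto
  also have "(\<Sum>p\<in>atoms. f p * measure \<nu> {p})
      = f 0 * measure \<nu> {0} + (\<Sum>i\<in>{1..<n}. f (gap_root i) * measure \<nu> {gap_root i})"
    using \<open>0 \<notin> gap_root ` {1..<n}\<close> sum.reindex[OF inj_on_gap_root, unfolded comp_def] by simp
  finally show ?thesis .
qed

lemma renewal_H_eq:
  assumes laplace: "ennreal (renewal_H (f_eta n a x) t) = (\<integral>\<^sup>+ s. ennreal (exp (- t * s)) \<partial>\<nu>)"
  shows "renewal_H (f_eta n a x) t
    = 1 / mean_eta (f_eta n a x) + (\<Sum>i\<in>{1..<n}. exp (- t * gap_root i) * measure \<nu> {gap_root i})"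
proof -
  define V where "V = measure \<nu> {0} + (\<Sum>i\<in>{1..<n}. exp (- t * gap_root i) * measure \<nu> {gap_root i})"
  have "ennreal (renewal_H (f_eta n a x) t) = ennreal V"
    unfolding laplace V_def by (subst nn_integral_\<nu>) auto
  moreover have "V > 0"
    using emeasure_\<nu>_zero_pos unfolding V_def emeasure_\<nu>_eq_measure
    by (intro add_pos_nonneg sum_nonneg mult_nonneg_nonneg) auto
  ultimately have "renewal_H (f_eta n a x) t = V"
    by (rule ennreal_eq_ennreal_pos_imp_eq)
  moreover have "mean_eta (f_eta n a x) = (\<Sum>j\<in>{1..n}. a j / x j)"
    using x_gt_0 by (rule mean_eta_f_eta)
  ultimately show ?thesis
    by (simp add: V_def measure_\<nu>_zero)
qed

end

theorem corollary2:
  fixes n :: nat and x a :: "nat \<Rightarrow> real" and \<mu> \<nu> :: "real measure"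
  assumes n_pos: "n \<ge> 1"
    and x_pos: "0 < x 1"
    and x_incr: "\<And>i. 1 \<le> i \<Longrightarrow> i < n \<Longrightarrow> x i < x (Suc i)"
    and a_pos: "\<And>i. i \<in> {1..n} \<Longrightarrow> a i > 0"
    and a_sum: "(\<Sum>i\<in>{1..n}. a i) = 1"
    and \<mu>_sets: "sets \<mu> = sets borel"
    and \<mu>_def: "\<And>A. A \<in> sets borel \<Longrightarrow> emeasure \<mu> A = ennreal (\<Sum>i\<in>{1..n}. a i * indicator A (x i))"
    and \<nu>_sets: "sets \<nu> = sets borel"
    and \<nu>_nonneg: "emeasure \<nu> {..<0} = 0"
    and \<nu>_integrable: "\<And>z. Im z \<noteq> 0 \<Longrightarrow> integrable \<nu> (\<lambda>s. 1 / (complex_of_real s - z))"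
    and \<nu>_stieltjes: "\<And>z. Im z \<noteq> 0 \<Longrightarrow> (1 + stieltjes \<nu> z) * stieltjes \<mu> z = - 1 / z"
    and \<nu>_laplace: "\<And>t. t > 0 \<Longrightarrow>
        ennreal (renewal_H (f_eta n a x) t) = (\<integral>\<^sup>+ s. ennreal (exp (- t * s)) \<partial>\<nu>)"
  shows "(\<forall>z. Im z \<noteq> 0 \<longrightarrow>
            stieltjes \<nu> z = - 1 / (z * (\<Sum>i\<in>{1..n}. complex_of_real (a i) / (complex_of_real (x i) - z))) - 1)
    \<and> (\<exists>y :: nat \<Rightarrow> real.
          (\<forall>i\<in>{1..<n}. x i < y i \<and> y i < x (Suc i)
              \<and> (\<Sum>j\<in>{1..n}. a j / (x j - y i)) = 0
              \<and> (\<forall>t. x i < t \<and> t < x (Suc i) \<and> (\<Sum>j\<in>{1..n}. a j / (x j - t)) = 0 \<longrightarrow> t = y i))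
        \<and> emeasure \<nu> (UNIV - insert 0 (y ` {1..<n})) = 0
        \<and> 0 < emeasure \<nu> {0} \<and> emeasure \<nu> {0} < \<infinity>
        \<and> (\<forall>i\<in>{1..<n}. 0 < emeasure \<nu> {y i} \<and> emeasure \<nu> {y i} < \<infinity>
              \<and> ((\<lambda>z. (complex_of_real (y i) - z) * stieltjes \<nu> z)
                   \<longlongrightarrow> complex_of_real (measure \<nu> {y i})) (at (complex_of_real (y i))))
        \<and> (\<forall>t>0. renewal_H (f_eta n a x) t
              = 1 / mean_eta (f_eta n a x) + (\<Sum>i\<in>{1..<n}. exp (- t * y i) * measure \<nu> {y i})))"
proof -
  interpret renewal_measures n x a \<mu> \<nu>
    by unfold_locales (fact n_pos x_pos x_incr a_pos \<mu>_sets \<mu>_def \<nu>_sets \<nu>_integrable \<nu>_stieltjes)+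
  show ?thesis
  proof (intro conjI exI[of _ gap_root])
    show "\<forall>z. Im z \<noteq> 0 \<longrightarrow>
        stieltjes \<nu> z = - 1 / (z * (\<Sum>i\<in>{1..n}. complex_of_real (a i) / (complex_of_real (x i) - z))) - 1"
      using stieltjes_\<nu> by (simp add: cauchy_sum_def)
    show "\<forall>i\<in>{1..<n}. x i < gap_root i \<and> gap_root i < x (Suc i)
        \<and> (\<Sum>j\<in>{1..n}. a j / (x j - gap_root i)) = 0
        \<and> (\<forall>t. x i < t \<and> t < x (Suc i) \<and> (\<Sum>j\<in>{1..n}. a j / (x j - t)) = 0 \<longrightarrow> t = gap_root i)"
      using gap_root gap_root_eqI by (simp add: cauchy_sum_real)
    show "\<forall>i\<in>{1..<n}. 0 < emeasure \<nu> {gap_root i} \<and> emeasure \<nu> {gap_root i} < \<infinity>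
        \<and> ((\<lambda>z. (complex_of_real (gap_root i) - z) * stieltjes \<nu> z)
            \<longlongrightarrow> complex_of_real (measure \<nu> {gap_root i})) (at (complex_of_real (gap_root i)))"
      using emeasure_\<nu>_gap_root_pos emeasure_\<nu>_singleton_finite tendsto_residue_\<nu> by simp
    show "\<forall>t>0. renewal_H (f_eta n a x) t
        = 1 / mean_eta (f_eta n a x) + (\<Sum>i\<in>{1..<n}. exp (- t * gap_root i) * measure \<nu> {gap_root i})"
      using renewal_H_eq \<nu>_laplace by simp
  qed (use emeasure_\<nu>_outside_atoms emeasure_\<nu>_zero_pos emeasure_\<nu>_singleton_finite in simp_all)
qed

end
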